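(* Let $K$ be a flag simplicial complex on $[m]$ that is a starshaped $(n-1)$-sphere, let $\Lambda=(\lambda_{ij})$ ($1\leqslant i\leqslant n$, $1\leqslant j\leqslant m$) be a characteristic matrix for $K$, and let $\mathcal J\subset\mathbb Z[x_1,\dots,x_m]$ be the ideal generated by the linear forms $\lambda_{i1}x_1+\cdots+\lambda_{im}x_m$, $1\leqslant i\leqslant n$. If $\mathcal J$ contains a nonzero linear form $a_ix_i+a_jx_j$ with $i\neq j$ and $a_i,a_j\in\mathbb Z$, then $K$ is a suspension.
   Context: A simplicial complex $K$ on $[m]$ is flag if every missing face (non-face all of whose proper subsets are faces) has two elements. A starshaped $(n-1)$-sphere is a triangulated sphere isomorphic to the underlying complex of a complete simplicial fan in $\mathbb R^n$. A characteristic matrix is an $n\times m$ integer matrix with columns $\boldsymbol\lambda_1,\dots,\boldsymbol\lambda_m$ such that for each face $\{i_1,\dots,i_k\}\in K$ the vectors $\boldsymbol\lambda_{i_1},\dots,\boldsymbol\lambda_{i_k}$ are part of a basis of $\mathbb Z^n$. $K$ is a suspension if $K=K_{\{a,b\}}*L$ with $\{a,b\}\notin K$ (join). (For the topological toric manifold $M(P_K,\Lambda)$ one has $H^*(M;\mathbb Z)=\mathbb Z[K]/\mathcal J$.) *)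

theory Defs
  imports "HOL-Analysis.Analysis" "HOL-Library.Poly_Mapping"
begin

definition simplicial_complex_on :: "nat \<Rightarrow> nat set set \<Rightarrow> bool" where
  "simplicial_complex_on m K \<longleftrightarrow>
     {} \<in> K \<and> (\<forall>\<sigma>\<in>K. \<sigma> \<subseteq> {1..m}) \<and> (\<forall>\<sigma>\<in>K. \<forall>\<tau>. \<tau> \<subseteq> \<sigma> \<longrightarrow> \<tau> \<in> K)"

definition missing_face :: "nat \<Rightarrow> nat set set \<Rightarrow> nat set \<Rightarrow> bool" where
  "missing_face m K \<sigma> \<longleftrightarrow> \<sigma> \<subseteq> {1..m} \<and> \<sigma> \<notin> K \<and> (\<forall>\<tau>. \<tau> \<subset> \<sigma> \<longrightarrow> \<tau> \<in> K)"

definition flag_complex :: "nat \<Rightarrow> nat set set \<Rightarrow> bool" where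
  "flag_complex m K \<longleftrightarrow> (\<forall>\<sigma>. missing_face m K \<sigma> \<longrightarrow> card \<sigma> = 2)"

definition face_cone :: "(nat \<Rightarrow> real ^ ('n::finite)) \<Rightarrow> nat set \<Rightarrow> (real ^ 'n) set" where
  "face_cone v \<sigma> = {(\<Sum>i\<in>\<sigma>. c i *\<^sub>R v i) | c. \<forall>i\<in>\<sigma>. c i \<ge> 0}"

text \<open>K is the underlying complex of a complete simplicial fan in R^n (n = CARD('n)),
  whose rays are spanned by v 1, ..., v m: every face spans a simplicial cone,
  the cones meet along common faces, and they cover R^n.\<close>
definition complete_simplicial_fan :: "nat \<Rightarrow> nat set set \<Rightarrow> (nat \<Rightarrow> real ^ ('n::finite)) \<Rightarrow> bool" where
  "complete_simplicial_fan m K v \<longleftrightarrow>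
     (\<forall>\<sigma>\<in>K. inj_on v \<sigma> \<and> independent (v ` \<sigma>)) \<and>
     (\<forall>\<sigma>\<in>K. \<forall>\<tau>\<in>K. face_cone v \<sigma> \<inter> face_cone v \<tau> = face_cone v (\<sigma> \<inter> \<tau>)) \<and>
     (\<Union>\<sigma>\<in>K. face_cone v \<sigma>) = UNIV"

definition starshaped_sphere :: "('n::finite) itself \<Rightarrow> nat \<Rightarrow> nat set set \<Rightarrow> bool" where
  "starshaped_sphere _ m K \<longleftrightarrow> simplicial_complex_on m K \<and> (\<forall>i\<in>{1..m}. {i} \<in> K) \<and>
     (\<exists>v :: nat \<Rightarrow> real ^ 'n. complete_simplicial_fan m K v)"

definition Z_basis :: "(('n::finite) \<Rightarrow> int ^ 'n) \<Rightarrow> bool" where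
  "Z_basis b \<longleftrightarrow> (\<forall>z :: int ^ 'n. \<exists>!c :: 'n \<Rightarrow> int. z = (\<Sum>k\<in>UNIV. c k *s b k))"

text \<open>Characteristic matrix: columns lam 1, ..., lam m in Z^n; for each face, its columns
  are part of a basis of Z^n.\<close>
definition characteristic_matrix :: "nat \<Rightarrow> nat set set \<Rightarrow> (nat \<Rightarrow> int ^ ('n::finite)) \<Rightarrow> bool" where
  "characteristic_matrix m K lam \<longleftrightarrow>
     (\<forall>\<sigma>\<in>K. \<exists>b :: 'n \<Rightarrow> int ^ 'n. \<exists>f :: nat \<Rightarrow> 'n.
        Z_basis b \<and> inj_on f \<sigma> \<and> (\<forall>i\<in>\<sigma>. b (f i) = lam i))"

type_synonym zpoly = "(nat \<Rightarrow>\<^sub>0 nat) \<Rightarrow>\<^sub>0 int"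

definition Var :: "nat \<Rightarrow> zpoly" where
  "Var i = Poly_Mapping.single (Poly_Mapping.single i 1) 1"

definition Const :: "int \<Rightarrow> zpoly" where
  "Const a = Poly_Mapping.single 0 a"

definition row_form :: "nat \<Rightarrow> (nat \<Rightarrow> int ^ ('n::finite)) \<Rightarrow> 'n \<Rightarrow> zpoly" where
  "row_form m lam i = (\<Sum>j\<in>{1..m}. Const (lam j $ i) * Var j)"

definition ideal_J :: "nat \<Rightarrow> (nat \<Rightarrow> int ^ ('n::finite)) \<Rightarrow> zpoly set" where
  "ideal_J m lam = {(\<Sum>i\<in>UNIV. g i * row_form m lam i) | g :: 'n \<Rightarrow> zpoly.
                     \<forall>i. \<forall>mon \<in> Poly_Mapping.keys (g i). Poly_Mapping.keys mon \<subseteq> {1..m}}"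

definition full_subcomplex :: "nat set set \<Rightarrow> nat set \<Rightarrow> nat set set" where
  "full_subcomplex K S = {\<sigma>\<in>K. \<sigma> \<subseteq> S}"

definition join :: "nat set set \<Rightarrow> nat set set \<Rightarrow> nat set set" where
  "join K1 K2 = {\<sigma> \<union> \<tau> | \<sigma> \<tau>. \<sigma> \<in> K1 \<and> \<tau> \<in> K2}"

definition is_suspension :: "nat \<Rightarrow> nat set set \<Rightarrow> bool" where
  "is_suspension m K \<longleftrightarrow> (\<exists>a b L. a \<in> {1..m} \<and> b \<in> {1..m} \<and> a \<noteq> b \<and> {a, b} \<notin> K \<and>
     simplicial_complex_on m L \<and> (\<forall>\<tau>\<in>L. \<tau> \<inter> {a, b} = {}) \<and>
     K = join (full_subcomplex K {a, b}) L)"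

end

theory Submission
  imports Defs
begin

text \<open>Comparing linear coefficients, a linear form in the ideal J is the pairing of the columns
  of the characteristic matrix with an integer functional c. If some facet of K avoided i and j,
  c would vanish on the columns of that facet, which form a basis of Z^n; then a_i = a_j = 0.
  So every facet meets {i, j}.

  Being the complex of a complete fan, K is pure of dimension n - 1 and each of its faces can
  be flipped across any of its vertices. Flipping i and then j out of a facet through the edge
  {i, j} gives either a facet avoiding {i, j} or, K being flag, a clique of size n + 1; hence
  {i, j} is not a face. For a face tau disjoint from {i, j}, flipping i out of a facet through
  tau + i brings in j, so tau + i and tau + j are both faces, and K is the join of {i, j} with
  the full subcomplex on the other vertices.\<close>

lemma single_one_eq_add_single_one_iff:
  "Poly_Mapping.single l 1 = (u :: nat \<Rightarrow>\<^sub>0 nat) + Poly_Mapping.single j 1 \<longleftrightarrow> u = 0 \<and> j = l"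
proof
  assume h: "Poly_Mapping.single l 1 = u + Poly_Mapping.single j 1"
  then have "Poly_Mapping.lookup u j + 1 = (1 when l = j)"
    by (metis lookup_add lookup_single_eq lookup_single)
  then have jl: "j = l" by (auto simp: when_def split: if_splits)
  with h have "0 + Poly_Mapping.single l 1 = u + Poly_Mapping.single l 1" by simp
  then have "u = 0" by (metis add_right_cancel)
  with jl show "u = 0 \<and> j = l" by simp
qed auto

lemma Const_mult_Var: "Const a * Var j = Poly_Mapping.single (Poly_Mapping.single j 1) a"
  by (simp add: Const_def Var_def mult_single)

lemma coeff_mult_Const_Var:
  "Poly_Mapping.lookup (g * (Const a * Var j)) (Poly_Mapping.single l 1) =
     (if j = l then Poly_Mapping.lookup g 0 * a else 0)"
proof -
  have "Poly_Mapping.lookup (g * (Const a * Var j)) (Poly_Mapping.single l 1) =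
     Sum_any (\<lambda>u. Poly_Mapping.lookup g u * (a when Poly_Mapping.single l 1 = u + Poly_Mapping.single j 1))"
    unfolding Const_mult_Var lookup_mult lookup_single
    by (intro Sum_any.cong arg_cong2[where f="(*)"] refl) (subst when_commute, simp)
  also have "\<dots> = Sum_any (\<lambda>u. (Poly_Mapping.lookup g u * a when j = l) when u = 0)"
    by (rule Sum_any.cong) (simp only: single_one_eq_add_single_one_iff when_def, auto)
  also have "\<dots> = (if j = l then Poly_Mapping.lookup g 0 * a else 0)"
    by (simp add: when_def)
  finally show ?thesis .
qed

lemma coeff_Const_Var:
  "Poly_Mapping.lookup (Const a * Var j) (Poly_Mapping.single l 1) = (if j = l then a else 0)"
  using coeff_mult_Const_Var[of 1 a j l] by (simp add: lookup_one)

text \<open>The functional is given by the constant terms of the multipliers of the row forms.\<close>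
lemma ideal_J_linear_coeffs:
  fixes lam :: "nat \<Rightarrow> int ^ 'n::finite"
  assumes "p \<in> ideal_J m lam"
  obtains c :: "'n \<Rightarrow> int"
  where "\<And>l. l \<in> {1..m} \<Longrightarrow>
           Poly_Mapping.lookup p (Poly_Mapping.single l 1) = (\<Sum>k\<in>UNIV. c k * lam l $ k)"
proof -
  obtain g where p: "p = (\<Sum>k\<in>UNIV. g k * row_form m lam k)"
    using assms by (auto simp: ideal_J_def)
  define c where "c k = Poly_Mapping.lookup (g k) 0" for k
  show thesis
  proof (rule that)
    fix l assume l: "l \<in> {1..m}"
    have "Poly_Mapping.lookup p (Poly_Mapping.single l 1) =
            (\<Sum>k\<in>UNIV. \<Sum>j\<in>{1..m}. if j = l then c k * lam j $ k else 0)"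
      unfolding p row_form_def lookup_sum sum_distrib_left coeff_mult_Const_Var c_def by (rule refl)
    also have "\<dots> = (\<Sum>k\<in>UNIV. c k * lam l $ k)"
      using l by (simp add: sum.delta')
    finally show "Poly_Mapping.lookup p (Poly_Mapping.single l 1) = (\<Sum>k\<in>UNIV. c k * lam l $ k)" .
  qed
qed

locale simplicial_complex =
  fixes m :: nat and K :: "nat set set"
  assumes complex: "simplicial_complex_on m K"
begin

lemma empty_face: "{} \<in> K"
  using complex by (simp add: simplicial_complex_on_def)

lemma face_subset_vertices: "\<sigma> \<in> K \<Longrightarrow> \<sigma> \<subseteq> {1..m}"
  using complex by (auto simp: simplicial_complex_on_def)

lemma finite_face: "\<sigma> \<in> K \<Longrightarrow> finite \<sigma>"
  using face_subset_vertices finite_subset by blast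

lemma finite_complex: "finite K"
  using face_subset_vertices by (intro finite_subset[of K "Pow {1..m}"]) auto

lemma face_subset_face: "\<sigma> \<in> K \<Longrightarrow> \<tau> \<subseteq> \<sigma> \<Longrightarrow> \<tau> \<in> K"
  using complex by (auto simp: simplicial_complex_on_def)

lemma face_Int: "\<sigma> \<in> K \<Longrightarrow> \<sigma> \<inter> S \<in> K" and face_Diff: "\<sigma> \<in> K \<Longrightarrow> \<sigma> - S \<in> K"
  using face_subset_face by blast+

end

lemma face_coneI:
  "x = (\<Sum>i\<in>\<sigma>. c i *\<^sub>R v i) \<Longrightarrow> \<forall>i\<in>\<sigma>. c i \<ge> 0 \<Longrightarrow> x \<in> face_cone v \<sigma>"
  unfolding face_cone_def by blast

lemma sum_rays_mem_face_cone: "(\<Sum>i\<in>\<sigma>. v i) \<in> face_cone v \<sigma>"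
  by (rule face_coneI[where c = "\<lambda>_. 1"]) simp_all

lemma face_cone_eq_convex_cone_hull:
  fixes v :: "nat \<Rightarrow> real ^ 'n::finite"
  assumes "finite \<sigma>"
  shows "face_cone v \<sigma> = convex_cone hull (v ` \<sigma>)"
proof
  show "face_cone v \<sigma> \<subseteq> convex_cone hull (v ` \<sigma>)"
  proof
    fix x assume "x \<in> face_cone v \<sigma>"
    then obtain c where x: "x = (\<Sum>i\<in>\<sigma>. c i *\<^sub>R v i)" and c: "\<forall>i\<in>\<sigma>. c i \<ge> 0"
      by (auto simp: face_cone_def)
    have "(\<Sum>i\<in>\<tau>. c i *\<^sub>R v i) \<in> convex_cone hull (v ` \<sigma>)" if "\<tau> \<subseteq> \<sigma>" for \<tau>
      using finite_subset[OF that assms] that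
    proof (induction \<tau> rule: finite_induct)
      case (insert i \<tau>)
      then have "c i *\<^sub>R v i \<in> convex_cone hull (v ` \<sigma>)"
        using c by (simp add: convex_cone_hull_mul hull_inc)
      with insert show ?case by (simp add: convex_cone_hull_add)
    qed (simp add: convex_cone_hull_contains_0)
    then show "x \<in> convex_cone hull (v ` \<sigma>)" unfolding x by blast
  qed
  show "convex_cone hull (v ` \<sigma>) \<subseteq> face_cone v \<sigma>"
  proof (rule hull_minimal)
    show "v ` \<sigma> \<subseteq> face_cone v \<sigma>"
    proof
      fix x assume "x \<in> v ` \<sigma>"
      then obtain k where k: "k \<in> \<sigma>" "x = v k" by auto
      then have "x = (\<Sum>i\<in>\<sigma>. (if i = k then 1 else 0) *\<^sub>R v i)"
        using assms by (simp add: if_distrib[of "\<lambda>t. t *\<^sub>R _"] cong: if_cong)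
      then show "x \<in> face_cone v \<sigma>" by (rule face_coneI) simp
    qed
    show "convex_cone (face_cone v \<sigma>)"
      unfolding convex_cone_iff
    proof (intro conjI ballI allI impI)
      show "0 \<in> face_cone v \<sigma>" by (rule face_coneI[where c = "\<lambda>_. 0"]) simp_all
    next
      fix x y assume "x \<in> face_cone v \<sigma>" "y \<in> face_cone v \<sigma>"
      then obtain c d where "x = (\<Sum>i\<in>\<sigma>. c i *\<^sub>R v i)" "\<forall>i\<in>\<sigma>. c i \<ge> 0"
        "y = (\<Sum>i\<in>\<sigma>. d i *\<^sub>R v i)" "\<forall>i\<in>\<sigma>. d i \<ge> 0"
        by (auto simp: face_cone_def)
      then show "x + y \<in> face_cone v \<sigma>"
        by (intro face_coneI[where c = "\<lambda>i. c i + d i"]) (simp_all add: sum.distrib scaleR_add_left)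
    next
      fix x and t :: real assume "x \<in> face_cone v \<sigma>" "t \<ge> 0"
      then obtain c where "x = (\<Sum>i\<in>\<sigma>. c i *\<^sub>R v i)" "\<forall>i\<in>\<sigma>. c i \<ge> 0"
        by (auto simp: face_cone_def)
      with \<open>t \<ge> 0\<close> show "t *\<^sub>R x \<in> face_cone v \<sigma>"
        by (intro face_coneI[where c = "\<lambda>i. t * c i"]) (simp_all add: scaleR_sum_right)
    qed
  qed
qed

lemma closed_face_cone:
  fixes v :: "nat \<Rightarrow> real ^ 'n::finite"
  shows "finite \<sigma> \<Longrightarrow> closed (face_cone v \<sigma>)"
  by (simp add: face_cone_eq_convex_cone_hull closed_convex_cone_hull)

lemma face_cone_mono:
  fixes v :: "nat \<Rightarrow> real ^ 'n::finite"
  assumes "finite \<sigma>" "\<tau> \<subseteq> \<sigma>"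
  shows "face_cone v \<tau> \<subseteq> face_cone v \<sigma>"
proof -
  have "convex_cone hull (v ` \<tau>) \<subseteq> convex_cone hull (v ` \<sigma>)"
    using assms(2) by (intro hull_mono image_mono)
  then show ?thesis
    using assms finite_subset[OF assms(2,1)] by (simp add: face_cone_eq_convex_cone_hull)
qed

lemma face_cone_subset_span: "face_cone v \<sigma> \<subseteq> span (v ` \<sigma>)"
proof
  fix x assume "x \<in> face_cone v \<sigma>"
  then obtain c where "x = (\<Sum>i\<in>\<sigma>. c i *\<^sub>R v i)" by (auto simp: face_cone_def)
  then show "x \<in> span (v ` \<sigma>)" by (simp add: span_sum span_mul span_base)
qed

lemma independent_image_coeffs_zero:
  fixes v :: "'a \<Rightarrow> 'b::euclidean_space"
  assumes "(\<Sum>i\<in>\<sigma>. a i *\<^sub>R v i) = 0"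
    and "finite \<sigma>" "inj_on v \<sigma>" "independent (v ` \<sigma>)" "k \<in> \<sigma>"
  shows "a k = 0"
proof -
  define c where "c x = a (inv_into \<sigma> v x)" for x
  have "(\<Sum>x\<in>v ` \<sigma>. c x *\<^sub>R x) = (\<Sum>i\<in>\<sigma>. a i *\<^sub>R v i)"
    using assms(3) by (simp add: sum.reindex c_def)
  then have "(\<Sum>x\<in>v ` \<sigma>. c x *\<^sub>R x) = 0" using assms(1) by simp
  then have "c (v k) = 0"
    using assms(4,5) unfolding independent_explicit by blast
  then show ?thesis by (simp add: c_def assms(3,5))
qed


locale complete_fan = simplicial_complex +
  fixes v :: "nat \<Rightarrow> real ^ 'n::finite"
  assumes fan: "complete_simplicial_fan m K v"
begin

lemma inj_on_face: "\<sigma> \<in> K \<Longrightarrow> inj_on v \<sigma>"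
  and independent_face: "\<sigma> \<in> K \<Longrightarrow> independent (v ` \<sigma>)"
  using fan by (auto simp: complete_simplicial_fan_def)

lemma face_cone_Int: "\<sigma> \<in> K \<Longrightarrow> \<tau> \<in> K \<Longrightarrow> face_cone v \<sigma> \<inter> face_cone v \<tau> = face_cone v (\<sigma> \<inter> \<tau>)"
  using fan by (auto simp: complete_simplicial_fan_def)

lemma face_cones_cover: obtains \<sigma> where "\<sigma> \<in> K" "x \<in> face_cone v \<sigma>"
proof -
  have "x \<in> (\<Union>\<sigma>\<in>K. face_cone v \<sigma>)" using fan by (simp add: complete_simplicial_fan_def)
  then show thesis using that by blast
qed

lemma card_face_le: "\<sigma> \<in> K \<Longrightarrow> card \<sigma> \<le> CARD('n)"
  using independent_bound[OF independent_face] by (simp add: card_image inj_on_face)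

lemma sum_rays_mem_face_cone_imp_subset:
  assumes "\<sigma> \<in> K" "G \<in> K" "(\<Sum>i\<in>\<sigma>. v i) \<in> face_cone v G"
  shows "\<sigma> \<subseteq> G"
proof
  fix k assume "k \<in> \<sigma>"
  have "(\<Sum>i\<in>\<sigma>. v i) \<in> face_cone v (\<sigma> \<inter> G)"
    using assms face_cone_Int sum_rays_mem_face_cone by blast
  then obtain c where c: "(\<Sum>i\<in>\<sigma>. v i) = (\<Sum>i\<in>\<sigma> \<inter> G. c i *\<^sub>R v i)"
    by (auto simp: face_cone_def)
  have "(\<Sum>i\<in>\<sigma>. (1 - (if i \<in> G then c i else 0)) *\<^sub>R v i) =
          (\<Sum>i\<in>\<sigma>. v i) - (\<Sum>i\<in>\<sigma> \<inter> G. c i *\<^sub>R v i)"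
    using finite_face[OF assms(1)]
    by (simp add: scaleR_diff_left sum_subtractf if_distrib[of "\<lambda>t. t *\<^sub>R _"] sum.inter_restrict
             cong: if_cong)
  also have "\<dots> = 0" using c by simp
  finally have "1 - (if k \<in> G then c k else 0) = 0"
    by (rule independent_image_coeffs_zero)
       (use assms(1) \<open>k \<in> \<sigma>\<close> in \<open>simp_all add: finite_face inj_on_face independent_face\<close>)
  then show "k \<in> G" by (auto split: if_splits)
qed

text \<open>The displaced points converge to the barycentre of sigma, which therefore lies in one of
  the finitely many closed cones of faces not contained in S; but a point of the relative
  interior of cone(sigma) lies only in cones of faces containing sigma.\<close>
lemma face_escapes_along:
  assumes "\<sigma> \<in> K"
    and escape: "\<And>t. t > 0 \<Longrightarrow> \<exists>G\<in>K. \<not> G \<subseteq> S \<and> (\<Sum>i\<in>\<sigma>. v i) + t *\<^sub>R w \<in> face_cone v G"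
  shows "\<exists>G\<in>K. \<sigma> \<subseteq> G \<and> \<not> G \<subseteq> S"
proof -
  define p where "p = (\<Sum>i\<in>\<sigma>. v i)"
  define A where "A = (\<Union>G\<in>{G\<in>K. \<not> G \<subseteq> S}. face_cone v G)"
  have "closed A"
    unfolding A_def using finite_complex finite_face closed_face_cone by (intro closed_UN) auto
  moreover have "p + inverse (real (Suc n)) *\<^sub>R w \<in> A" for n
    using escape[of "inverse (real (Suc n))"] by (auto simp: A_def p_def)
  moreover have "(\<lambda>n. p + inverse (real (Suc n)) *\<^sub>R w) \<longlonglongrightarrow> p"
    using tendsto_add[OF tendsto_const tendsto_scaleR[OF LIMSEQ_inverse_real_of_nat tendsto_const]]
    by simp
  ultimately have "p \<in> A" by (rule closed_sequentially)
  then obtain G where "G \<in> K" "\<not> G \<subseteq> S" "p \<in> face_cone v G" by (auto simp: A_def)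
  then show ?thesis
    using sum_rays_mem_face_cone_imp_subset assms(1) unfolding p_def by blast
qed

lemma face_extend:
  assumes "\<sigma> \<in> K" "card \<sigma> < CARD('n)"
  obtains y where "y \<notin> \<sigma>" "insert y \<sigma> \<in> K"
proof -
  have "span (v ` \<sigma>) \<noteq> UNIV"
  proof
    assume "span (v ` \<sigma>) = UNIV"
    then have "dim (UNIV :: (real ^ 'n) set) = dim (v ` \<sigma>)" by (metis dim_span)
    also have "\<dots> \<le> card (v ` \<sigma>)"
      using finite_face[OF assms(1)] by (intro dim_le_card) (auto intro: span_base)
    also have "\<dots> \<le> card \<sigma>" using finite_face[OF assms(1)] by (rule card_image_le)
    finally show False using assms(2) by simp
  qed
  then obtain w where w: "w \<notin> span (v ` \<sigma>)" by blast
  have "\<exists>G\<in>K. \<sigma> \<subseteq> G \<and> \<not> G \<subseteq> \<sigma>"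
  proof (rule face_escapes_along[OF assms(1)])
    fix t :: real assume "t > 0"
    obtain G where G: "G \<in> K" "(\<Sum>i\<in>\<sigma>. v i) + t *\<^sub>R w \<in> face_cone v G"
      by (rule face_cones_cover)
    have "\<not> G \<subseteq> \<sigma>"
    proof
      assume "G \<subseteq> \<sigma>"
      then have "(\<Sum>i\<in>\<sigma>. v i) + t *\<^sub>R w \<in> span (v ` \<sigma>)"
        using G face_cone_mono[OF finite_face[OF assms(1)]] face_cone_subset_span by blast
      moreover have "(\<Sum>i\<in>\<sigma>. v i) \<in> span (v ` \<sigma>)"
        by (intro span_sum span_base imageI)
      ultimately have "(1 / t) *\<^sub>R ((\<Sum>i\<in>\<sigma>. v i) + t *\<^sub>R w - (\<Sum>i\<in>\<sigma>. v i)) \<in> span (v ` \<sigma>)"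
        by (intro span_mul span_diff)
      then show False using w \<open>t > 0\<close> by simp
    qed
    with G show "\<exists>G\<in>K. \<not> G \<subseteq> \<sigma> \<and> (\<Sum>i\<in>\<sigma>. v i) + t *\<^sub>R w \<in> face_cone v G" by blast
  qed
  then obtain G y where "G \<in> K" "\<sigma> \<subseteq> G" "y \<in> G" "y \<notin> \<sigma>" by blast
  then show thesis using that face_subset_face[of G "insert y \<sigma>"] by blast
qed

lemma face_in_facet:
  assumes "\<sigma> \<in> K"
  obtains F where "F \<in> K" "\<sigma> \<subseteq> F" "card F = CARD('n)"
  using assms
proof (induction "CARD('n) - card \<sigma>" arbitrary: \<sigma> rule: less_induct)
  case less
  show thesis
  proof (cases "card \<sigma> = CARD('n)")
    case True
    then show thesis using less.prems by blast
  next
    case False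
    then have "card \<sigma> < CARD('n)" using card_face_le less.prems(2) by force
    then obtain y where y: "y \<notin> \<sigma>" "insert y \<sigma> \<in> K" using face_extend less.prems(2) by blast
    then have "CARD('n) - card (insert y \<sigma>) < CARD('n) - card \<sigma>"
      using \<open>card \<sigma> < CARD('n)\<close> finite_face less.prems(2) by simp
    from less.hyps[OF this _ y(2)] less.prems(1) show thesis by blast
  qed
qed

lemma face_flip:
  assumes "F \<in> K" "x \<in> F"
  obtains y where "y \<notin> F" "insert y (F - {x}) \<in> K"
proof -
  have "\<exists>G\<in>K. F - {x} \<subseteq> G \<and> \<not> G \<subseteq> F"
  proof (rule face_escapes_along)
    show "F - {x} \<in> K" using assms face_subset_face by blast
  next
    fix t :: real assume "t > 0"
    define q where "q = (\<Sum>i\<in>F - {x}. v i) + t *\<^sub>R - v x"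
    obtain G where G: "G \<in> K" "q \<in> face_cone v G" by (rule face_cones_cover)
    have "\<not> G \<subseteq> F"
    proof
      assume "G \<subseteq> F"
      then have "q \<in> face_cone v F" using G face_cone_mono[OF finite_face[OF assms(1)]] by blast
      then obtain c where qc: "q = (\<Sum>i\<in>F. c i *\<^sub>R v i)" and c: "\<forall>i\<in>F. c i \<ge> 0"
        by (auto simp: face_cone_def)
      have "q = (\<Sum>i\<in>F. (if i = x then - t else 1) *\<^sub>R v i)"
        unfolding q_def using finite_face[OF assms(1)] assms(2)
        by (simp add: sum.remove[of F x] if_distrib[of "\<lambda>t. t *\<^sub>R _"] cong: if_cong)
      with qc have "(\<Sum>i\<in>F. ((if i = x then - t else 1) - c i) *\<^sub>R v i) = 0"
        by (simp add: scaleR_diff_left sum_subtractf)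
      then have "(if x = x then - t else 1) - c x = 0"
        by (rule independent_image_coeffs_zero)
           (use assms in \<open>simp_all add: finite_face inj_on_face independent_face\<close>)
      then show False using c assms(2) \<open>t > 0\<close> by auto
    qed
    with G show "\<exists>G\<in>K. \<not> G \<subseteq> F \<and> (\<Sum>i\<in>F - {x}. v i) + t *\<^sub>R - v x \<in> face_cone v G"
      unfolding q_def by blast
  qed
  then obtain G y where "G \<in> K" "F - {x} \<subseteq> G" "y \<in> G" "y \<notin> F" by blast
  then show thesis using that face_subset_face[of G "insert y (F - {x})"] by blast
qed

end

lemma ex_minimal_non_face:
  assumes "finite U" "U \<notin> K"
  shows "\<exists>U'\<subseteq>U. U' \<notin> K \<and> (\<forall>W. W \<subset> U' \<longrightarrow> W \<in> K)"
  using assms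
proof (induction U rule: finite_psubset_induct)
  case (psubset U)
  show ?case
  proof (cases "\<forall>W. W \<subset> U \<longrightarrow> W \<in> K")
    case True
    then show ?thesis using psubset.prems by blast
  next
    case False
    then obtain W where "W \<subset> U" "W \<notin> K" by blast
    from psubset.IH[OF this] obtain U' where "U' \<subseteq> W" "U' \<notin> K" "\<forall>W. W \<subset> U' \<longrightarrow> W \<in> K"
      by blast
    then show ?thesis using \<open>W \<subset> U\<close> by blast
  qed
qed

lemma flag_complex_face_if_edges:
  assumes "flag_complex m K" "finite T" "T \<subseteq> {1..m}"
    and edges: "\<And>a b. a \<in> T \<Longrightarrow> b \<in> T \<Longrightarrow> a \<noteq> b \<Longrightarrow> {a, b} \<in> K"
  shows "T \<in> K"
proof (rule ccontr)
  assume "T \<notin> K"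
  then obtain U where U: "U \<subseteq> T" "U \<notin> K" "\<forall>W. W \<subset> U \<longrightarrow> W \<in> K"
    using ex_minimal_non_face[OF assms(2)] by blast
  then have "missing_face m K U" using assms(3) unfolding missing_face_def by blast
  then have "card U = 2" using assms(1) unfolding flag_complex_def by blast
  then obtain a b where "U = {a, b}" "a \<noteq> b" by (auto simp: card_2_iff)
  then show False using U edges by auto
qed

lemma card_insert_Diff_singleton:
  assumes "finite F" "x \<in> F" "y \<notin> F"
  shows "card (insert y (F - {x})) = card F"
proof -
  have "card (insert y (F - {x})) = Suc (card (F - {x}))" using assms by simp
  also have "\<dots> = card F" using assms(1,2) by (rule card_Suc_Diff1)
  finally show ?thesis .
qed

text \<open>The assumption flippable says that the pure complex has no boundary: every ridge lies in
  at least two facets.\<close>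
locale flag_closed_pseudomanifold = simplicial_complex +
  fixes N :: nat
  assumes flag: "flag_complex m K"
    and card_bounded: "\<sigma> \<in> K \<Longrightarrow> card \<sigma> \<le> N"
    and pure: "\<sigma> \<in> K \<Longrightarrow> \<exists>F\<in>K. \<sigma> \<subseteq> F \<and> card F = N"
    and flippable: "F \<in> K \<Longrightarrow> x \<in> F \<Longrightarrow> \<exists>y. y \<notin> F \<and> insert y (F - {x}) \<in> K"
begin

lemma pair_not_face:
  assumes "i \<noteq> j" and meets: "\<And>F. F \<in> K \<Longrightarrow> card F = N \<Longrightarrow> F \<inter> {i, j} \<noteq> {}"
  shows "{i, j} \<notin> K"
proof
  assume "{i, j} \<in> K"
  then obtain F where F: "F \<in> K" "{i, j} \<subseteq> F" "card F = N" using pure by blast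
  obtain y1 where y1: "y1 \<notin> F" "insert y1 (F - {i}) \<in> K" using flippable[OF F(1)] F(2) by blast
  define G where "G = insert y1 (F - {i})"
  have G: "G \<in> K" "j \<in> G" "i \<notin> G" using y1 F assms(1) by (auto simp: G_def)
  obtain y2 where y2: "y2 \<notin> G" "insert y2 (G - {j}) \<in> K" using flippable[OF G(1,2)] by blast
  show False
  proof (cases "y2 = i")
    case True
    have y1_edge: "{y1, z} \<in> K" if "z \<in> F" for z
    proof (cases "z = i")
      case True
      then have "{y1, z} \<subseteq> insert y2 (G - {j})" using \<open>y2 = i\<close> y1 F(2) by (auto simp: G_def)
      then show ?thesis using y2(2) face_subset_face by blast
    next
      case False
      then have "{y1, z} \<subseteq> G" using that by (auto simp: G_def)
      then show ?thesis using G(1) face_subset_face by blast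
    qed
    have edge: "{a, b} \<in> K" if ab: "a \<in> insert y1 F" "b \<in> insert y1 F" "a \<noteq> b" for a b
    proof -
      consider "a = y1" "b \<in> F" | "b = y1" "a \<in> F" | "{a, b} \<subseteq> F" using ab by blast
      then show ?thesis
      proof cases
        case 1
        then show ?thesis using y1_edge[of b] by simp
      next
        case 2
        then show ?thesis using y1_edge[of a] by (simp add: insert_commute)
      next
        case 3
        then show ?thesis using F(1) face_subset_face by blast
      qed
    qed
    have "y1 \<in> {1..m}" using face_subset_vertices[OF G(1)] by (auto simp: G_def)
    then have vertices: "insert y1 F \<subseteq> {1..m}" using face_subset_vertices[OF F(1)] by simp
    have "insert y1 F \<in> K"
      by (rule flag_complex_face_if_edges[OF flag _ vertices edge]) (simp add: finite_face[OF F(1)])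
    then have "card (insert y1 F) \<le> N" by (rule card_bounded)
    then show False using finite_face[OF F(1)] y1(1) F(3) by simp
  next
    case False
    have "card G = N"
      using card_insert_Diff_singleton[OF finite_face[OF F(1)] _ y1(1), of i] F by (simp add: G_def)
    then have "card (insert y2 (G - {j})) = N"
      using card_insert_Diff_singleton[OF finite_face[OF G(1)] G(2) y2(1)] by simp
    moreover have "insert y2 (G - {j}) \<inter> {i, j} = {}" using False G y2 by auto
    ultimately show False using meets y2(2) by blast
  qed
qed

lemma link_swap:
  assumes "a \<noteq> b" and meets: "\<And>F. F \<in> K \<Longrightarrow> card F = N \<Longrightarrow> F \<inter> {a, b} \<noteq> {}"
    and "a \<notin> \<tau>" "insert a \<tau> \<in> K"
  shows "insert b \<tau> \<in> K"
proof -
  obtain F where F: "F \<in> K" "insert a \<tau> \<subseteq> F" "card F = N"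
    using pure[OF assms(4)] by blast
  have "a \<in> F" using F(2) by simp
  have "b \<notin> F"
  proof
    assume "b \<in> F"
    with \<open>a \<in> F\<close> have "{a, b} \<subseteq> F" by simp
    then have "{a, b} \<in> K" by (rule face_subset_face[OF F(1)])
    with pair_not_face[OF assms(1) meets] show False by contradiction
  qed
  obtain y where y: "y \<notin> F" "insert y (F - {a}) \<in> K"
    using flippable[OF F(1) \<open>a \<in> F\<close>] by blast
  show ?thesis
  proof (cases "y = b")
    case True
    have "insert b \<tau> \<subseteq> insert y (F - {a})" using True F(2) \<open>a \<notin> \<tau>\<close> by auto
    then show ?thesis by (rule face_subset_face[OF y(2)])
  next
    case False
    have "card (insert y (F - {a})) = N"
      using card_insert_Diff_singleton[OF finite_face[OF F(1)] \<open>a \<in> F\<close> y(1)] F(3) by simp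
    moreover have "insert y (F - {a}) \<inter> {a, b} = {}"
      using False \<open>b \<notin> F\<close> \<open>a \<in> F\<close> y(1) by auto
    ultimately show ?thesis using meets[OF y(2)] by simp
  qed
qed

lemma is_suspension_if_facets_meet_pair:
  assumes "i \<in> {1..m}" "j \<in> {1..m}" "i \<noteq> j"
    and meets: "\<And>F. F \<in> K \<Longrightarrow> card F = N \<Longrightarrow> F \<inter> {i, j} \<noteq> {}"
  shows "is_suspension m K"
proof -
  have meets': "\<And>F. F \<in> K \<Longrightarrow> card F = N \<Longrightarrow> F \<inter> {j, i} \<noteq> {}"
    using meets by (simp add: insert_commute)
  have not_face: "{i, j} \<notin> K" using pair_not_face[OF assms(3) meets] .
  have cone: "insert i \<tau> \<in> K \<and> insert j \<tau> \<in> K" if \<tau>: "\<tau> \<in> K" "\<tau> \<inter> {i, j} = {}" for \<tau>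
  proof -
    obtain F where F: "F \<in> K" "\<tau> \<subseteq> F" "card F = N" using pure[OF \<tau>(1)] by blast
    then have "insert i \<tau> \<subseteq> F \<or> insert j \<tau> \<subseteq> F" using meets[OF F(1,3)] by blast
    then have "insert i \<tau> \<in> K \<or> insert j \<tau> \<in> K" using F(1) face_subset_face by blast
    then show ?thesis
      using link_swap[OF assms(3) meets] link_swap[OF assms(3)[symmetric] meets'] \<tau>(2) by blast
  qed
  define L where "L = {\<tau> \<in> K. \<tau> \<inter> {i, j} = {}}"
  have "K \<subseteq> join (full_subcomplex K {i, j}) L"
  proof
    fix \<sigma> assume "\<sigma> \<in> K"
    then have "\<sigma> \<inter> {i, j} \<in> full_subcomplex K {i, j}" "\<sigma> - {i, j} \<in> L"
      by (auto simp: full_subcomplex_def L_def face_Int face_Diff)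
    moreover have "\<sigma> = (\<sigma> \<inter> {i, j}) \<union> (\<sigma> - {i, j})" by blast
    ultimately show "\<sigma> \<in> join (full_subcomplex K {i, j}) L" unfolding join_def by blast
  qed
  moreover have "join (full_subcomplex K {i, j}) L \<subseteq> K"
  proof
    fix x assume "x \<in> join (full_subcomplex K {i, j}) L"
    then obtain \<sigma> \<tau> where x: "x = \<sigma> \<union> \<tau>" "\<sigma> \<in> K" "\<sigma> \<subseteq> {i, j}" "\<tau> \<in> K" "\<tau> \<inter> {i, j} = {}"
      unfolding join_def full_subcomplex_def L_def by blast
    have "i \<notin> \<sigma> \<or> j \<notin> \<sigma>" using not_face face_subset_face[OF x(2), of "{i, j}"] by blast
    then have "x \<subseteq> insert i \<tau> \<or> x \<subseteq> insert j \<tau>" using x(1,3) by blast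
    then show "x \<in> K" using cone[OF x(4,5)] face_subset_face by blast
  qed
  ultimately have "K = join (full_subcomplex K {i, j}) L" by (rule antisym)
  moreover have "simplicial_complex_on m L"
    unfolding simplicial_complex_on_def
  proof (intro conjI ballI allI impI)
    show "{} \<in> L" using empty_face by (simp add: L_def)
    show "\<sigma> \<subseteq> {1..m}" if "\<sigma> \<in> L" for \<sigma> using that face_subset_vertices by (simp add: L_def)
    show "\<tau> \<in> L" if "\<sigma> \<in> L" "\<tau> \<subseteq> \<sigma>" for \<sigma> \<tau> using that face_subset_face by (auto simp: L_def)
  qed
  moreover have "\<forall>\<tau>\<in>L. \<tau> \<inter> {i, j} = {}" by (simp add: L_def)
  ultimately show ?thesis unfolding is_suspension_def using assms(1-3) not_face by blast
qed

end

lemma characteristic_matrix_functional_vanishes: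
  fixes lam :: "nat \<Rightarrow> int ^ 'n::finite" and c :: "'n \<Rightarrow> int"
  assumes "characteristic_matrix m K lam" "\<sigma> \<in> K" "card \<sigma> = CARD('n)"
    and zero: "\<And>l. l \<in> \<sigma> \<Longrightarrow> (\<Sum>k\<in>UNIV. c k * lam l $ k) = 0"
  shows "(\<Sum>k\<in>UNIV. c k * z $ k) = 0"
proof -
  obtain b and f :: "nat \<Rightarrow> 'n" where b: "Z_basis b" and f: "inj_on f \<sigma>" "\<forall>i\<in>\<sigma>. b (f i) = lam i"
    using assms(1,2) unfolding characteristic_matrix_def by blast
  have "finite \<sigma>" using assms(3) card_gt_0_iff by fastforce
  then have "card (f ` \<sigma>) = CARD('n)" using f(1) assms(3) by (simp add: card_image)
  then have f_onto: "f ` \<sigma> = UNIV" by (intro card_eq_UNIV_imp_eq_UNIV) auto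
  have b_zero: "(\<Sum>k\<in>UNIV. c k * b r $ k) = 0" for r
  proof -
    obtain l where "l \<in> \<sigma>" "r = f l" using f_onto by (metis UNIV_I imageE)
    then show ?thesis using f(2) zero by simp
  qed
  obtain d where z: "z = (\<Sum>r\<in>UNIV. d r *s b r)" using b unfolding Z_basis_def by blast
  have "(\<Sum>k\<in>UNIV. c k * z $ k) = (\<Sum>k\<in>UNIV. \<Sum>r\<in>UNIV. d r * (c k * b r $ k))"
    unfolding z by (simp add: sum_distrib_left mult.left_commute)
  also have "\<dots> = (\<Sum>r\<in>UNIV. d r * (\<Sum>k\<in>UNIV. c k * b r $ k))"
    by (subst sum.swap) (simp add: sum_distrib_left)
  also have "\<dots> = 0" using b_zero by simp
  finally show ?thesis .
qed

lemma facet_meets_support_of_linear_form: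
  fixes lam :: "nat \<Rightarrow> int ^ 'n::finite"
  assumes "characteristic_matrix m K lam" "simplicial_complex_on m K"
    and ij: "i \<in> {1..m}" "j \<in> {1..m}" "i \<noteq> j"
    and nonzero: "Const a\<^sub>i * Var i + Const a\<^sub>j * Var j \<noteq> 0"
    and member: "Const a\<^sub>i * Var i + Const a\<^sub>j * Var j \<in> ideal_J m lam"
    and F: "F \<in> K" "card F = CARD('n)"
  shows "F \<inter> {i, j} \<noteq> {}"
proof
  assume avoids: "F \<inter> {i, j} = {}"
  obtain c :: "'n \<Rightarrow> int" where c: "\<And>l. l \<in> {1..m} \<Longrightarrow>
      Poly_Mapping.lookup (Const a\<^sub>i * Var i + Const a\<^sub>j * Var j) (Poly_Mapping.single l 1) =
      (\<Sum>k\<in>UNIV. c k * lam l $ k)"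
    using ideal_J_linear_coeffs[OF member] by blast
  have pairing: "(\<Sum>k\<in>UNIV. c k * lam l $ k) = (if i = l then a\<^sub>i else 0) + (if j = l then a\<^sub>j else 0)"
    if "l \<in> {1..m}" for l
    using c[OF that] unfolding lookup_add coeff_Const_Var by simp
  have "F \<subseteq> {1..m}" using assms(2) F(1) by (auto simp: simplicial_complex_on_def)
  then have "(\<Sum>k\<in>UNIV. c k * lam l $ k) = 0" if "l \<in> F" for l
    using pairing[of l] that avoids by auto
  then have vanishes: "(\<Sum>k\<in>UNIV. c k * z $ k) = 0" for z
    by (rule characteristic_matrix_functional_vanishes[OF assms(1) F])
  have "a\<^sub>i = 0" using vanishes[of "lam i"] pairing[OF ij(1)] ij(3) by simp
  moreover have "a\<^sub>j = 0" using vanishes[of "lam j"] pairing[OF ij(2)] ij(3) by simp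
  ultimately show False using nonzero by (simp add: Const_def)
qed

theorem mainTheorem14:
  fixes m :: nat and K :: "nat set set" and lam :: "nat \<Rightarrow> int ^ 'n"
  assumes "flag_complex m K"
    and "starshaped_sphere TYPE('n) m K"
    and "characteristic_matrix m K lam"
    and "\<exists>i j a\<^sub>i a\<^sub>j. i \<in> {1..m} \<and> j \<in> {1..m} \<and> i \<noteq> j \<and>
           Const a\<^sub>i * Var i + Const a\<^sub>j * Var j \<noteq> 0 \<and>
           Const a\<^sub>i * Var i + Const a\<^sub>j * Var j \<in> ideal_J m lam"
  shows "is_suspension m K"
proof -
  obtain i j a\<^sub>i a\<^sub>j where ij: "i \<in> {1..m}" "j \<in> {1..m}" "i \<noteq> j"
    and form: "Const a\<^sub>i * Var i + Const a\<^sub>j * Var j \<noteq> 0"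
      "Const a\<^sub>i * Var i + Const a\<^sub>j * Var j \<in> ideal_J m lam"
    using assms(4) by blast
  obtain v :: "nat \<Rightarrow> real ^ 'n" where "simplicial_complex_on m K" "complete_simplicial_fan m K v"
    using assms(2) by (auto simp: starshaped_sphere_def)
  then interpret complete_fan m K v by unfold_locales
  interpret flag_closed_pseudomanifold m K "CARD('n)"
  proof
    show "flag_complex m K" by (fact assms(1))
    show "card \<sigma> \<le> CARD('n)" if "\<sigma> \<in> K" for \<sigma> using that by (rule card_face_le)
    show "\<exists>F\<in>K. \<sigma> \<subseteq> F \<and> card F = CARD('n)" if "\<sigma> \<in> K" for \<sigma>
      using face_in_facet[OF that] by blast
    show "\<exists>y. y \<notin> F \<and> insert y (F - {x}) \<in> K" if "F \<in> K" "x \<in> F" for F x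
      using face_flip[OF that] by blast
  qed
  show ?thesis
    using is_suspension_if_facets_meet_pair[OF ij]
      facet_meets_support_of_linear_form[OF assms(3) complex ij form] by blast
qed

end
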